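(* Let $\Bbbk$ be an algebraically closed field of characteristic $0$ and let $P=\Bbbk[x_1,\dots,x_n]$ be a quadratic Poisson algebra. Let $G$ be a subgroup of $\mathrm{PAut}_{\mathrm{gr}}(P)$ and $\widetilde G=\{\widetilde\phi:\phi\in G\}$. Then $\widetilde G$ is a subgroup of the graded automorphism group of $U(P)$ and the map $\phi\mapsto\widetilde\phi$ is a group isomorphism $G\cong\widetilde G$.
   Context: $P$ has the standard grading and is quadratic: $\{P_1,P_1\}\subseteq P_2$. $\mathrm{PAut}_{\mathrm{gr}}(P)$ is the group of degree-preserving bijective Poisson (algebra and Lie) homomorphisms of $P$. $U(P)$ is the $\Bbbk$-algebra generated by $x_1,\dots,x_n,y_1,\dots,y_n$ (degree $1$) with relations $[x_i,x_j]=0$, $[y_i,y_j]=\sum_k\frac{\partial\{x_i,x_j\}}{\partial x_k}y_k$, $[y_i,x_j]=\{x_i,x_j\}$. For $\phi\in\mathrm{PAut}_{\mathrm{gr}}(P)$, $\widetilde\phi$ is the graded automorphism of $U(P)$ with $\widetilde\phi(x_i)=\phi(x_i)$, $\widetilde\phi(y_i)=\sum_j\frac{\partial\phi(x_i)}{\partial x_j}y_j$. *)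

theory Defs
  imports "HOL-Library.Poly_Mapping" "HOL-Computational_Algebra.Polynomial" "HOL-Algebra.Bij"
begin

type_synonym ('n, 'k) mpoly = "('n \<Rightarrow>\<^sub>0 nat) \<Rightarrow>\<^sub>0 'k"

definition Var :: "'n \<Rightarrow> ('n, 'k::comm_semiring_1) mpoly" where
  "Var i = Poly_Mapping.single (Poly_Mapping.single i 1) 1"

definition Const :: "'k \<Rightarrow> ('n, 'k::comm_semiring_1) mpoly" where
  "Const c = Poly_Mapping.single 0 c"

definition mdeg :: "('n::finite \<Rightarrow>\<^sub>0 nat) \<Rightarrow> nat" where
  "mdeg m = (\<Sum>i\<in>UNIV. Poly_Mapping.lookup m i)"

definition homogeneous :: "nat \<Rightarrow> ('n::finite, 'k::comm_semiring_1) mpoly \<Rightarrow> bool" where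
  "homogeneous d p \<longleftrightarrow> (\<forall>m\<in>Poly_Mapping.keys p. mdeg m = d)"

definition pd :: "'n \<Rightarrow> ('n, 'k::comm_semiring_1) mpoly \<Rightarrow> ('n, 'k) mpoly" where
  "pd i p = (\<Sum>m\<in>Poly_Mapping.keys p. Poly_Mapping.single (m - Poly_Mapping.single i 1)
                                 (of_nat (Poly_Mapping.lookup m i) * Poly_Mapping.lookup p m))"

definition poisson_bracket :: "(('n, 'k::field) mpoly \<Rightarrow> ('n, 'k) mpoly \<Rightarrow> ('n, 'k) mpoly) \<Rightarrow> bool" where
  "poisson_bracket br \<longleftrightarrow>
     (\<forall>p q r. br (p + q) r = br p r + br q r) \<and>
     (\<forall>c p q. br (Const c * p) q = Const c * br p q) \<and>
     (\<forall>p q. br p q = - br q p) \<and>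
     (\<forall>p q r. br p (br q r) + br q (br r p) + br r (br p q) = 0) \<and>
     (\<forall>p q r. br p (q * r) = br p q * r + q * br p r)"

definition quadratic_poisson :: "(('n::finite, 'k::field) mpoly \<Rightarrow> ('n, 'k) mpoly \<Rightarrow> ('n, 'k) mpoly) \<Rightarrow> bool" where
  "quadratic_poisson br \<longleftrightarrow> poisson_bracket br \<and>
     (\<forall>p q. homogeneous 1 p \<longrightarrow> homogeneous 1 q \<longrightarrow> homogeneous 2 (br p q))"

definition PAut_gr :: "(('n::finite, 'k::field) mpoly \<Rightarrow> ('n, 'k) mpoly \<Rightarrow> ('n, 'k) mpoly)
     \<Rightarrow> (('n, 'k) mpoly \<Rightarrow> ('n, 'k) mpoly) set" where
  "PAut_gr br = {\<phi>. bij \<phi> \<and>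
      (\<forall>p q. \<phi> (p + q) = \<phi> p + \<phi> q) \<and>
      (\<forall>p q. \<phi> (p * q) = \<phi> p * \<phi> q) \<and>
      \<phi> 1 = 1 \<and>
      (\<forall>c p. \<phi> (Const c * p) = Const c * \<phi> p) \<and>
      (\<forall>p q. \<phi> (br p q) = br (\<phi> p) (\<phi> q)) \<and>
      (\<forall>d p. homogeneous d p \<longrightarrow> homogeneous d (\<phi> p))}"

definition PAutGrp :: "(('n::finite, 'k::field) mpoly \<Rightarrow> ('n, 'k) mpoly \<Rightarrow> ('n, 'k) mpoly)
     \<Rightarrow> (('n, 'k) mpoly \<Rightarrow> ('n, 'k) mpoly) monoid" where
  "PAutGrp br = \<lparr>carrier = PAut_gr br, mult = (\<circ>), one = id\<rparr>"

datatype 'a fword = FW (fwlist: "'a list")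

instantiation fword :: (type) monoid_add
begin
definition zero_fword :: "'a fword" where "zero_fword = FW []"
definition plus_fword :: "'a fword \<Rightarrow> 'a fword \<Rightarrow> 'a fword" where
  "plus_fword u v = FW (fwlist u @ fwlist v)"
instance by standard (auto simp: zero_fword_def plus_fword_def)
end

type_synonym ('n, 'k) falg = "('n + 'n) fword \<Rightarrow>\<^sub>0 'k"

definition FConst :: "'k \<Rightarrow> ('n, 'k::field) falg" where
  "FConst c = Poly_Mapping.single 0 c"

definition Gen :: "'n + 'n \<Rightarrow> ('n, 'k::field) falg" where
  "Gen g = Poly_Mapping.single (FW [g]) 1"

abbreviation X :: "'n \<Rightarrow> ('n, 'k::field) falg" where "X i \<equiv> Gen (Inl i)"
abbreviation Y :: "'n \<Rightarrow> ('n, 'k::field) falg" where "Y i \<equiv> Gen (Inr i)"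

definition comm :: "('n, 'k::field) falg \<Rightarrow> ('n, 'k) falg \<Rightarrow> ('n, 'k) falg" where
  "comm a b = a * b - b * a"

definition free_ext :: "('n + 'n \<Rightarrow> ('n, 'k::field) falg) \<Rightarrow> ('n, 'k) falg \<Rightarrow> ('n, 'k) falg" where
  "free_ext h a = (\<Sum>w\<in>Poly_Mapping.keys a. FConst (Poly_Mapping.lookup a w) * prod_list (map h (fwlist w)))"

text \<open>image of a commutative polynomial in x's inside the free algebra (monomials are
  written as words in the x's in some order; in U(P) the x's commute, so the order is irrelevant)\<close>
definition mono_word :: "('n \<Rightarrow>\<^sub>0 nat) \<Rightarrow> 'n list" where
  "mono_word m = (SOME xs. \<forall>i. count_list xs i = Poly_Mapping.lookup m i)"

definition emb :: "('n, 'k::field) mpoly \<Rightarrow> ('n, 'k) falg" where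
  "emb p = (\<Sum>m\<in>Poly_Mapping.keys p. FConst (Poly_Mapping.lookup p m) * prod_list (map X (mono_word m)))"

definition Urels :: "(('n::finite, 'k::field) mpoly \<Rightarrow> ('n, 'k) mpoly \<Rightarrow> ('n, 'k) mpoly)
     \<Rightarrow> ('n, 'k) falg set" where
  "Urels br = (\<Union>i j.
      {comm (X i) (X j),
       comm (Y i) (Y j) - (\<Sum>k\<in>UNIV. emb (pd k (br (Var i) (Var j))) * Y k),
       comm (Y i) (X j) - emb (br (Var i) (Var j))})"

definition tsideal :: "('a::ring) set \<Rightarrow> 'a set" where
  "tsideal R = \<Inter>{I. R \<subseteq> I \<and> 0 \<in> I \<and> (\<forall>a\<in>I. \<forall>b\<in>I. a + b \<in> I) \<and>
                     (\<forall>a\<in>I. \<forall>r. r * a \<in> I \<and> a * r \<in> I)}"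

definition UI where "UI br = tsideal (Urels br)"

definition Ucls :: "_ \<Rightarrow> ('n::finite, 'k::field) falg \<Rightarrow> ('n, 'k) falg set" where
  "Ucls br a = {b. a - b \<in> UI br}"

definition Ucarrier where "Ucarrier br = range (Ucls br)"

definition Uadd where
  "Uadd br A B = {c. \<exists>a\<in>A. \<exists>b\<in>B. c - (a + b) \<in> UI br}"
definition Umult where
  "Umult br A B = {c. \<exists>a\<in>A. \<exists>b\<in>B. c - a * b \<in> UI br}"
definition Usmul where
  "Usmul br k A = {c. \<exists>a\<in>A. c - FConst k * a \<in> UI br}"
definition Uone where "Uone br = Ucls br 1"

definition fhom :: "nat \<Rightarrow> ('n, 'k::field) falg \<Rightarrow> bool" where
  "fhom d a \<longleftrightarrow> (\<forall>w\<in>Poly_Mapping.keys a. length (fwlist w) = d)"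

definition Udeg where "Udeg br d = Ucls br ` {a. fhom d a}"

definition GrAut_U where
  "GrAut_U br = {\<Phi>. \<Phi> \<in> Bij (Ucarrier br) \<and>
      (\<forall>A\<in>Ucarrier br. \<forall>B\<in>Ucarrier br. \<Phi> (Uadd br A B) = Uadd br (\<Phi> A) (\<Phi> B)) \<and>
      (\<forall>A\<in>Ucarrier br. \<forall>B\<in>Ucarrier br. \<Phi> (Umult br A B) = Umult br (\<Phi> A) (\<Phi> B)) \<and>
      (\<forall>c. \<forall>A\<in>Ucarrier br. \<Phi> (Usmul br c A) = Usmul br c (\<Phi> A)) \<and>
      \<Phi> (Uone br) = Uone br \<and>
      (\<forall>d. \<Phi> ` Udeg br d \<subseteq> Udeg br d)}"

definition GrAutGrp_U where
  "GrAutGrp_U br = (BijGroup (Ucarrier br))\<lparr>carrier := GrAut_U br\<rparr>"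

definition tilde_gen :: "(('n::finite, 'k::field) mpoly \<Rightarrow> ('n, 'k) mpoly) \<Rightarrow> 'n + 'n \<Rightarrow> ('n, 'k) falg" where
  "tilde_gen \<phi> g = (case g of Inl i \<Rightarrow> emb (\<phi> (Var i))
                            | Inr i \<Rightarrow> (\<Sum>j\<in>UNIV. emb (pd j (\<phi> (Var i))) * Y j))"

definition tilde where
  "tilde br \<phi> = (\<lambda>A\<in>Ucarrier br. Ucls br (free_ext (tilde_gen \<phi>) (SOME a. a \<in> A)))"

end

(*
  A graded Poisson automorphism \<phi> is linear on generators, \<phi>(x_i) = \<Sum>_k a_ik x_k, and its lift
  sends x_i to \<phi>(x_i) and y_i to d(\<phi> x_i) = \<Sum>_k a_ik y_k, where d p = \<Sum>_k (\<partial>p/\<partial>x_k) y_k.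
  In U(P) one has [y_k, f] = {x_k, f} for every f and [d q, d q'] = d{q, q'} for linear q, q'.
  Hence the lift carries the defining relations for x_i, y_j to the same relations for
  \<phi>(x_i), d(\<phi> x_j), which hold because \<phi> preserves the bracket; together with the chain rule
  lift(d f) = d(\<phi> f) this shows that \<phi>~ is a well-defined graded automorphism with
  (\<phi> \<psi>)~ = \<phi>~ \<psi>~ and id~ = id. Injectivity of \<phi> \<mapsto> \<phi>~ comes from the U(P)-module P, with x_i
  acting by multiplication and y_i by {x_i, -}: the class of x_i sends 1 to x_i.
*)

theory Submission
  imports Defs "HOL-Library.Multiset"
begin

abbreviation lookup :: "('a \<Rightarrow>\<^sub>0 'b::zero) \<Rightarrow> 'a \<Rightarrow> 'b" where "lookup \<equiv> Poly_Mapping.lookup"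
abbreviation keys :: "('a \<Rightarrow>\<^sub>0 'b::zero) \<Rightarrow> 'a set" where "keys \<equiv> Poly_Mapping.keys"
abbreviation single :: "'a \<Rightarrow> 'b::zero \<Rightarrow> 'a \<Rightarrow>\<^sub>0 'b" where "single \<equiv> Poly_Mapping.single"

lemma sum_single_lookup:
  assumes "finite S" "keys p \<subseteq> S"
  shows "(\<Sum>m\<in>S. single m (lookup p m)) = p"
proof (rule poly_mapping_eqI)
  fix k
  have "lookup (\<Sum>m\<in>S. single m (lookup p m)) k = (\<Sum>m\<in>S. if m = k then lookup p m else 0)"
    by (simp add: lookup_sum lookup_single when_def)
  also have "\<dots> = lookup p k"
    using assms by (auto simp: sum.delta' in_keys_iff)
  finally show "lookup (\<Sum>m\<in>S. single m (lookup p m)) k = lookup p k" .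
qed

lemma poly_mapping_induct [case_names zero single add]:
  fixes p :: "'a \<Rightarrow>\<^sub>0 'b::comm_monoid_add"
  assumes "P 0" "\<And>k v. P (single k v)" "\<And>a b. P a \<Longrightarrow> P b \<Longrightarrow> P (a + b)"
  shows "P p"
proof -
  have "P (\<Sum>m\<in>S. single m (lookup p m))" if "finite S" for S
    using that by (induction S rule: finite_induct) (auto intro: assms)
  then show ?thesis
    using sum_single_lookup[of "keys p" p] by (metis finite_keys order_refl)
qed

lemma sum_keys_add:
  assumes "\<And>k. f k 0 = 0" "\<And>k a b. f k (a + b) = f k a + f k b"
  shows "(\<Sum>k\<in>keys (p + q). f k (lookup (p + q) k))
       = (\<Sum>k\<in>keys p. f k (lookup p k)) + (\<Sum>k\<in>keys q. f k (lookup q k))"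
  by (rule setsum_keys_plus_distrib) (use assms in auto)

lemma sum_keys_single:
  assumes "f k 0 = 0"
  shows "(\<Sum>m\<in>keys (single k c). f m (lookup (single k c) m)) = f k c"
  using assms by (cases "c = 0") simp_all

lemma Const_0 [simp]: "Const 0 = 0"
  by (simp add: Const_def)

lemma Const_1 [simp]: "Const 1 = 1"
  by (simp add: Const_def)

lemma Const_add: "Const (a + b) = Const a + Const b"
  by (simp add: Const_def single_add)

lemma Const_mult: "Const (a * b) = Const a * Const b"
  by (simp add: Const_def mult_single)

lemma Const_mult_single: "Const c * single m d = single m (c * d)"
  by (simp add: Const_def mult_single)

lemma lookup_Const_mult: "lookup (Const c * p) m = c * lookup p m"
  by (induction p rule: poly_mapping_induct)
     (simp_all add: Const_mult_single lookup_single when_def distrib_left lookup_add)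

lemma Var_power: "(Var i :: ('n, 'k::comm_semiring_1) mpoly) ^ k = single (single i k) 1"
  by (induction k) (simp_all add: Var_def mult_single single_add[symmetric] add.commute)

lemma single_as_prod_Var:
  "(single m c :: ('n::finite, 'k::comm_semiring_1) mpoly) = Const c * (\<Prod>i\<in>UNIV. Var i ^ lookup m i)"
proof -
  have prod_singles: "(\<Prod>i\<in>A. single (f i) 1 :: ('n, 'k) mpoly) = single (\<Sum>i\<in>A. f i) 1"
    for A and f :: "'n \<Rightarrow> 'n \<Rightarrow>\<^sub>0 nat"
    by (induction A rule: infinite_finite_induct) (auto simp: mult_single)
  have "(\<Sum>i\<in>UNIV. single i (lookup m i)) = m"
    by (rule sum_single_lookup) auto
  then show ?thesis
    by (simp add: Var_power prod_singles Const_mult_single)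
qed

lemma mpoly_induct [case_names Const Var add mult]:
  fixes p :: "('n::finite, 'k::comm_semiring_1) mpoly"
  assumes Const: "\<And>c. P (Const c)" and Var: "\<And>i. P (Var i)"
    and closed_add: "\<And>p q. P p \<Longrightarrow> P q \<Longrightarrow> P (p + q)"
    and closed_mult: "\<And>p q. P p \<Longrightarrow> P q \<Longrightarrow> P (p * q)"
  shows "P p"
proof (induction p rule: poly_mapping_induct)
  case zero
  then show ?case using Const[of 0] by simp
next
  case (single m c)
  have "P (Var i ^ k)" for i k
    by (induction k) (use Const[of 1] Var closed_mult in auto)
  then have "P (\<Prod>i\<in>B. Var i ^ lookup m i)" for B
    by (induction B rule: infinite_finite_induct) (use Const[of 1] closed_mult in auto)
  then show ?case
    using single_as_prod_Var[of m c] closed_mult Const by metis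
next
  case (add a b)
  then show ?case by (rule closed_add)
qed

lemma pd_add: "pd i (p + q) = pd i p + pd i q"
  unfolding pd_def by (rule sum_keys_add) (simp_all add: distrib_left single_add)

lemma pd_zero [simp]: "pd i 0 = 0"
  by (simp add: pd_def)

lemma pd_single: "pd i (single m c) = single (m - single i 1) (of_nat (lookup m i) * c)"
  unfolding pd_def by (rule sum_keys_single) simp

lemma pd_sum: "pd i (sum f A) = (\<Sum>a\<in>A. pd i (f a))"
  by (induction A rule: infinite_finite_induct) (auto simp: pd_add)

lemma pd_Const_mult: "pd i (Const c * p) = Const c * pd i p"
  by (induction p rule: poly_mapping_induct)
     (simp_all add: Const_mult_single pd_single ac_simps distrib_left pd_add)

lemma pd_Const [simp]: "pd i (Const c) = 0"
  by (simp add: Const_def pd_single)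

lemma pd_Var: "pd i (Var j) = Const (if i = j then 1 else 0)"
  by (auto simp: Var_def pd_single lookup_single Const_def)

lemma pd_mult_single:
  "pd k (single a c * single b d :: ('n, 'k::comm_semiring_1) mpoly)
     = pd k (single a c) * single b d + single a c * pd k (single b d)"
proof -
  have minus_add: "x - single k 1 + y = x + y - single k 1" if "lookup x k > 0"
    for x y :: "'n \<Rightarrow>\<^sub>0 nat"
    by (rule poly_mapping_eqI) (use that in \<open>auto simp: lookup_add lookup_minus lookup_single when_def\<close>)
  have "pd k (single a c) * single b d = single (a + b - single k 1) (of_nat (lookup a k) * c * d)"
    by (cases "lookup a k > 0") (auto simp: pd_single mult_single minus_add[unfolded One_nat_def])
  moreover have "single a c * pd k (single b d) = single (a + b - single k 1) (c * (of_nat (lookup b k) * d))"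
    by (cases "lookup b k > 0") (auto simp: pd_single mult_single minus_add[unfolded One_nat_def] add.commute[of a])
  ultimately show ?thesis
    by (simp add: mult_single pd_single lookup_add algebra_simps single_add)
qed

lemma pd_mult: "pd k (p * q :: ('n, 'k::comm_semiring_1) mpoly) = pd k p * q + p * pd k q"
proof (induction p rule: poly_mapping_induct)
  case (single a c)
  show ?case
    by (induction q rule: poly_mapping_induct)
       (simp_all add: pd_mult_single algebra_simps pd_add)
next
  case (add p1 p2)
  then show ?case by (simp add: algebra_simps pd_add)
qed simp

lemma sum_Const_delta:
  fixes i :: "'a::finite" and f :: "'a \<Rightarrow> ('n, 'k::comm_semiring_1) mpoly"
  shows "(\<Sum>k\<in>UNIV. Const (if k = i then 1 else 0) * f k) = f i"
proof -
  have "(\<Sum>k\<in>UNIV. Const (if k = i then 1 else 0) * f k) = (\<Sum>k\<in>UNIV. if k = i then f k else 0)"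
    by (rule sum.cong) auto
  then show ?thesis by simp
qed

locale poisson_algebra =
  fixes br :: "('n::finite, 'k::field) mpoly \<Rightarrow> ('n, 'k) mpoly \<Rightarrow> ('n, 'k) mpoly"
  assumes poisson_bracket: "poisson_bracket br"
begin

lemma bracket_add_left: "br (p + q) r = br p r + br q r"
  using poisson_bracket unfolding poisson_bracket_def by blast

lemma bracket_Const_mult_left: "br (Const c * p) q = Const c * br p q"
  using poisson_bracket unfolding poisson_bracket_def by blast

lemma bracket_skew: "br p q = - br q p"
  using poisson_bracket unfolding poisson_bracket_def by blast

lemma bracket_jacobi: "br p (br q r) + br q (br r p) + br r (br p q) = 0"
  using poisson_bracket unfolding poisson_bracket_def by blast

lemma bracket_leibniz_right: "br p (q * r) = br p q * r + q * br p r"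
  using poisson_bracket unfolding poisson_bracket_def by blast

lemma bracket_add_right: "br p (q + r) = br p q + br p r"
proof -
  have "br p (q + r) = - br q p - br r p"
    by (simp add: bracket_skew[of p] bracket_add_left)
  then show ?thesis
    by (simp add: bracket_skew[of q p] bracket_skew[of r p])
qed

lemma bracket_Const_mult_right: "br p (Const c * q) = Const c * br p q"
  using bracket_skew[of p "Const c * q"] bracket_skew[of q p] by (simp add: bracket_Const_mult_left)

lemma bracket_zero_right [simp]: "br p 0 = 0"
  using bracket_add_right[of p 0 0] by simp

lemma bracket_uminus_right: "br p (- q) = - br p q"
  by (metis bracket_add_right bracket_zero_right add.right_inverse neg_eq_iff_add_eq_0)

lemma bracket_sum_left: "br (sum f A) q = (\<Sum>a\<in>A. br (f a) q)"
  by (induction A rule: infinite_finite_induct) (auto simp: bracket_add_left bracket_skew[of 0])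

lemma bracket_sum_right: "br q (sum f A) = (\<Sum>a\<in>A. br q (f a))"
  by (induction A rule: infinite_finite_induct) (auto simp: bracket_add_right)

lemma bracket_Const_right [simp]: "br p (Const c) = 0"
  using bracket_leibniz_right[of p 1 1] bracket_Const_mult_right[of p c 1] by simp

lemma bracket_Const_left [simp]: "br (Const c) p = 0"
  by (subst bracket_skew) simp

lemma bracket_leibniz_left: "br (p * q) r = br p r * q + p * br q r"
  using bracket_skew[of "p * q" r] bracket_skew[of r p] bracket_skew[of r q]
  by (simp add: bracket_leibniz_right algebra_simps)

lemma bracket_chain_rule: "br f p = (\<Sum>k\<in>UNIV. pd k f * br (Var k) p)"
proof (induction f rule: mpoly_induct)
  case (Var i)
  then show ?case by (simp add: pd_Var sum_Const_delta)
next
  case (add f g)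
  then show ?case by (simp add: bracket_add_left pd_add distrib_right sum.distrib)
next
  case (mult f g)
  have "br (f * g) p = (\<Sum>k\<in>UNIV. (pd k f * g + f * pd k g) * br (Var k) p)"
    by (simp add: bracket_leibniz_left mult sum_distrib_left sum_distrib_right sum.distrib algebra_simps)
  then show ?case by (simp add: pd_mult)
qed simp

end

lemma single_1_eq_iff: "single k (1::nat) = single j 1 \<longleftrightarrow> k = j"
  by (metis lookup_single_eq lookup_single_not_eq zero_neq_one)

lemma mdeg_single: "mdeg (single k n :: 'n::finite \<Rightarrow>\<^sub>0 nat) = n"
proof -
  have "mdeg (single k n :: 'n \<Rightarrow>\<^sub>0 nat) = (\<Sum>i\<in>UNIV. if i = k then n else 0)"
    unfolding mdeg_def by (rule sum.cong) (auto simp: lookup_single when_def)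
  then show ?thesis by simp
qed

lemma mdeg_eq_1_iff: "mdeg (m :: 'n::finite \<Rightarrow>\<^sub>0 nat) = 1 \<longleftrightarrow> (\<exists>k. m = single k 1)"
proof
  assume "mdeg m = 1"
  then obtain a where a: "lookup m a = 1" "\<forall>b. a \<noteq> b \<longrightarrow> lookup m b = 0"
    unfolding mdeg_def sum_eq_1_iff[OF finite_UNIV] by auto
  have "m = single a 1"
    by (rule poly_mapping_eqI) (use a in \<open>auto simp: lookup_single when_def\<close>)
  then show "\<exists>k. m = single k 1" ..
qed (auto simp: mdeg_single)

lemma homogeneous_single: "homogeneous (mdeg m) (single m c)"
  by (simp add: homogeneous_def)

lemma homogeneous_Var: "homogeneous 1 (Var i :: ('n::finite, 'k::comm_semiring_1) mpoly)"
  by (simp add: homogeneous_def Var_def mdeg_single)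

lemma homogeneous_diff:
  "homogeneous d p \<Longrightarrow> homogeneous d q \<Longrightarrow> homogeneous d (p - q :: ('n::finite, 'k::comm_ring_1) mpoly)"
  using keys_diff[of p q] unfolding homogeneous_def by blast

lemma homogeneous_sum: "(\<And>a. a \<in> A \<Longrightarrow> homogeneous d (f a)) \<Longrightarrow> homogeneous d (sum f A)"
  using keys_sum[of f A] unfolding homogeneous_def by blast

lemma homogeneous_1_expand:
  fixes q :: "('n::finite, 'k::field) mpoly"
  assumes "homogeneous 1 q"
  shows "q = (\<Sum>k\<in>UNIV. Const (lookup q (single k 1)) * Var k)"
proof (rule poly_mapping_eqI)
  fix m
  have "lookup (\<Sum>k\<in>UNIV. Const (lookup q (single k 1)) * Var k) m
      = (\<Sum>k\<in>UNIV. if m = single k 1 then lookup q m else 0)"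
    by (auto simp: lookup_sum lookup_Const_mult Var_def lookup_single when_def intro!: sum.cong)
  also have "\<dots> = lookup q m"
  proof (cases "\<exists>j. m = single j 1")
    case True
    then obtain j where "m = single j 1" by blast
    then have "(\<Sum>k\<in>UNIV. if m = single k 1 then lookup q m else 0)
             = (\<Sum>k\<in>UNIV. if k = j then lookup q m else 0)"
      by (intro sum.cong) (auto simp: single_1_eq_iff[unfolded One_nat_def])
    then show ?thesis by simp
  next
    case False
    then have "m \<notin> keys q"
      using assms mdeg_eq_1_iff[of m] by (auto simp: homogeneous_def)
    then show ?thesis using False by (simp add: in_keys_iff)
  qed
  finally show "lookup q m = lookup (\<Sum>k\<in>UNIV. Const (lookup q (single k 1)) * Var k) m" ..
qed

definition jacobian :: "(('n, 'k::comm_semiring_1) mpoly \<Rightarrow> ('n, 'k) mpoly) \<Rightarrow> 'n \<Rightarrow> 'n \<Rightarrow> 'k" where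
  "jacobian \<phi> i k = lookup (\<phi> (Var i)) (single k 1)"

locale graded_poisson_aut =
  fixes br :: "('n::finite, 'k::field) mpoly \<Rightarrow> ('n, 'k) mpoly \<Rightarrow> ('n, 'k) mpoly"
    and \<phi> :: "('n, 'k) mpoly \<Rightarrow> ('n, 'k) mpoly"
  assumes PAut: "\<phi> \<in> PAut_gr br"
begin

lemma bij: "bij \<phi>"
  using PAut unfolding PAut_gr_def by blast

lemma map_add: "\<phi> (p + q) = \<phi> p + \<phi> q"
  using PAut unfolding PAut_gr_def by blast

lemma map_mult: "\<phi> (p * q) = \<phi> p * \<phi> q"
  using PAut unfolding PAut_gr_def by blast

lemma map_one [simp]: "\<phi> 1 = 1"
  using PAut unfolding PAut_gr_def by blast

lemma map_Const_mult: "\<phi> (Const c * p) = Const c * \<phi> p"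
  using PAut unfolding PAut_gr_def by blast

lemma map_bracket: "\<phi> (br p q) = br (\<phi> p) (\<phi> q)"
  using PAut unfolding PAut_gr_def by blast

lemma map_homogeneous: "homogeneous d p \<Longrightarrow> homogeneous d (\<phi> p)"
  using PAut unfolding PAut_gr_def by blast

lemma map_zero [simp]: "\<phi> 0 = 0"
  using map_add[of 0 0] by simp

lemma map_diff: "\<phi> (p - q) = \<phi> p - \<phi> q"
  by (metis add_diff_cancel diff_add_cancel map_add)

lemma map_sum: "\<phi> (sum f A) = (\<Sum>a\<in>A. \<phi> (f a))"
  by (induction A rule: infinite_finite_induct) (auto simp: map_add)

lemma map_Const [simp]: "\<phi> (Const c) = Const c"
  using map_Const_mult[of c 1] by simp

lemma pd_chain_rule: "pd l (\<phi> f) = (\<Sum>k\<in>UNIV. \<phi> (pd k f) * pd l (\<phi> (Var k)))"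
proof (induction f rule: mpoly_induct)
  case (Var i)
  then show ?case by (simp add: pd_Var sum_Const_delta)
next
  case (add f g)
  then show ?case by (simp add: map_add pd_add distrib_right sum.distrib)
next
  case (mult f g)
  have "pd l (\<phi> (f * g)) = (\<Sum>k\<in>UNIV. (\<phi> (pd k f) * \<phi> g + \<phi> f * \<phi> (pd k g)) * pd l (\<phi> (Var k)))"
    by (simp add: map_mult pd_mult mult sum_distrib_left sum_distrib_right sum.distrib algebra_simps)
  then show ?case by (simp add: pd_mult map_add map_mult)
qed simp

lemma map_Var_expand: "\<phi> (Var i) = (\<Sum>k\<in>UNIV. Const (jacobian \<phi> i k) * Var k)"
  unfolding jacobian_def by (rule homogeneous_1_expand) (rule map_homogeneous[OF homogeneous_Var])

lemma pd_map_Var: "pd l (\<phi> (Var i)) = Const (jacobian \<phi> i l)"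
proof -
  have "pd l (\<phi> (Var i)) = (\<Sum>k\<in>UNIV. Const (jacobian \<phi> i k) * Const (if l = k then 1 else 0))"
    by (subst map_Var_expand) (simp add: pd_sum pd_Const_mult pd_Var)
  also have "\<dots> = (\<Sum>k\<in>UNIV. if k = l then Const (jacobian \<phi> i k) else 0)"
    by (rule sum.cong) auto
  finally show ?thesis by simp
qed

text \<open>Since \<open>\<phi>\<close> maps monomials to homogeneous polynomials of the same degree, it cannot
  create a component of degree \<open>d\<close>.\<close>
lemma map_avoids_degree:
  assumes "\<forall>m\<in>keys p. mdeg m \<noteq> d"
  shows "\<forall>m\<in>keys (\<phi> p). mdeg m \<noteq> d"
proof
  fix m' assume "m' \<in> keys (\<phi> p)"
  moreover have "\<phi> p = (\<Sum>m\<in>keys p. \<phi> (single m (lookup p m)))"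
    using sum_single_lookup[of "keys p" p] map_sum by (metis finite_keys order_refl)
  ultimately obtain m where m: "m \<in> keys p" "m' \<in> keys (\<phi> (single m (lookup p m)))"
    using keys_sum[of "\<lambda>m. \<phi> (single m (lookup p m))" "keys p"] by auto
  have "homogeneous (mdeg m) (\<phi> (single m (lookup p m)))"
    by (rule map_homogeneous[OF homogeneous_single])
  then show "mdeg m' \<noteq> d"
    using m assms unfolding homogeneous_def by auto
qed

lemma homogeneous_preimage:
  assumes "homogeneous d (\<phi> q)"
  shows "homogeneous d q"
proof -
  define qd where "qd = (\<Sum>m\<in>{m\<in>keys q. mdeg m = d}. single m (lookup q m))"
  have qd: "homogeneous d qd"
    unfolding qd_def by (rule homogeneous_sum) (auto simp: homogeneous_def)
  have "lookup qd m = lookup q m" if "mdeg m = d" for m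
    using that unfolding qd_def
    by (cases "m \<in> keys q") (simp_all add: lookup_sum lookup_single when_def in_keys_iff)
  then have "\<forall>m\<in>keys (q - qd). mdeg m \<noteq> d"
    by (auto simp: in_keys_iff lookup_minus)
  then have "\<forall>m\<in>keys (\<phi> (q - qd)). mdeg m \<noteq> d"
    by (rule map_avoids_degree)
  moreover have "homogeneous d (\<phi> (q - qd))"
    unfolding map_diff by (rule homogeneous_diff[OF assms map_homogeneous[OF qd]])
  ultimately have "\<phi> (q - qd) = \<phi> 0"
    unfolding homogeneous_def by auto
  then have "q - qd = 0"
    by (rule injD[OF bij_is_inj[OF bij]])
  then show ?thesis using qd by simp
qed

lemma inv_PAut: "inv_into UNIV \<phi> \<in> PAut_gr br"
proof -
  let ?\<psi> = "inv_into UNIV \<phi>"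
  have \<phi>\<psi>: "\<phi> (?\<psi> x) = x" for x
    using bij by (simp add: bij_is_surj surj_f_inv_f)
  have \<psi>_eq: "?\<psi> a = b \<longleftrightarrow> a = \<phi> b" for a b
    using \<phi>\<psi> bij_is_inj[OF bij] by (metis inv_f_f)
  show ?thesis unfolding PAut_gr_def
  proof (intro CollectI conjI allI impI)
    show "bij ?\<psi>" using bij by (rule bij_imp_bij_inv)
    show "homogeneous d (?\<psi> p)" if "homogeneous d p" for d p
      by (rule homogeneous_preimage) (simp add: \<phi>\<psi> that)
  qed (simp_all add: \<psi>_eq \<phi>\<psi> map_add map_mult map_Const_mult map_bracket)
qed

end

lemma PAut_gr_id: "id \<in> PAut_gr br"
  unfolding PAut_gr_def by simp

lemma PAut_gr_comp:
  assumes "\<phi> \<in> PAut_gr br" "\<psi> \<in> PAut_gr br"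
  shows "\<phi> \<circ> \<psi> \<in> PAut_gr br"
proof -
  interpret \<phi>: graded_poisson_aut br \<phi> by standard (rule assms(1))
  interpret \<psi>: graded_poisson_aut br \<psi> by standard (rule assms(2))
  show ?thesis
    unfolding PAut_gr_def
    by (simp add: bij_comp \<phi>.bij \<psi>.bij \<phi>.map_add \<psi>.map_add \<phi>.map_mult \<psi>.map_mult
                  \<phi>.map_Const_mult \<psi>.map_Const_mult \<phi>.map_bracket \<psi>.map_bracket
                  \<phi>.map_homogeneous \<psi>.map_homogeneous)
qed

lemma group_PAutGrp: "group (PAutGrp br)"
proof (rule groupI)
  fix \<phi> assume "\<phi> \<in> carrier (PAutGrp br)"
  then interpret graded_poisson_aut br \<phi> by unfold_locales (simp add: PAutGrp_def)
  have "inv_into UNIV \<phi> \<circ> \<phi> = id"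
    using bij by (simp add: bij_is_inj)
  then show "\<exists>\<psi>\<in>carrier (PAutGrp br). \<psi> \<otimes>\<^bsub>PAutGrp br\<^esub> \<phi> = \<one>\<^bsub>PAutGrp br\<^esub>"
    using inv_PAut by (auto simp: PAutGrp_def)
qed (auto simp: PAutGrp_def PAut_gr_id PAut_gr_comp comp_assoc)

lemma fwlist_plus [simp]: "fwlist (u + v) = fwlist u @ fwlist v"
  by (simp add: plus_fword_def)

lemma fwlist_zero [simp]: "fwlist 0 = []"
  by (simp add: zero_fword_def)

lemma FW_Nil: "FW [] = 0"
  by (simp add: zero_fword_def)

lemma FConst_0 [simp]: "FConst 0 = 0"
  by (simp add: FConst_def)

lemma FConst_1 [simp]: "FConst 1 = 1"
  by (simp add: FConst_def)

lemma FConst_add: "FConst (a + b) = FConst a + FConst b"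
  by (simp add: FConst_def single_add)

lemma FConst_mult: "FConst (a * b) = FConst a * FConst b"
  by (simp add: FConst_def mult_single)

lemma FConst_mult_single: "FConst c * single w d = single w (c * d)"
  by (simp add: FConst_def mult_single)

lemma FConst_commute: "FConst c * a = a * (FConst c :: ('n, 'k::field) falg)"
  by (induction a rule: poly_mapping_induct)
     (simp_all add: FConst_mult_single FConst_def mult_single mult.commute algebra_simps)

lemma prod_list_Gen: "prod_list (map Gen w) = (single (FW w) 1 :: ('n, 'k::field) falg)"
  by (induction w) (simp_all add: FW_Nil Gen_def mult_single plus_fword_def)

lemma free_ext_add: "free_ext h (a + b) = free_ext h a + free_ext h b"
  unfolding free_ext_def by (rule sum_keys_add) (simp_all add: FConst_add distrib_right)

lemma free_ext_zero [simp]: "free_ext h 0 = 0"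
  by (simp add: free_ext_def)

lemma free_ext_single: "free_ext h (single w c) = FConst c * prod_list (map h (fwlist w))"
  unfolding free_ext_def by (rule sum_keys_single) simp

lemma free_ext_diff: "free_ext h (a - b) = free_ext h a - free_ext h b"
  by (metis add_diff_cancel diff_add_cancel free_ext_add)

lemma free_ext_sum: "free_ext h (sum f A) = (\<Sum>x\<in>A. free_ext h (f x))"
  by (induction A rule: infinite_finite_induct) (auto simp: free_ext_add)

lemma free_ext_mult: "free_ext h (a * b) = free_ext h a * free_ext h b"
proof (induction a rule: poly_mapping_induct)
  case (single u c)
  show ?case
  proof (induction b rule: poly_mapping_induct)
    case (single v d)
    have "FConst c * FConst d * (prod_list (map h (fwlist u)) * prod_list (map h (fwlist v)))
        = FConst c * prod_list (map h (fwlist u)) * (FConst d * prod_list (map h (fwlist v)))"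
      by (simp add: FConst_commute[of d] mult.assoc)
    then show ?case
      by (simp add: mult_single free_ext_single FConst_mult)
  next
    case (add b1 b2)
    then show ?case by (simp add: distrib_left free_ext_add)
  qed simp
next
  case (add a1 a2)
  then show ?case by (simp add: distrib_right free_ext_add)
qed simp

lemma free_ext_FConst [simp]: "free_ext h (FConst c) = FConst c"
  by (simp add: FConst_def free_ext_single)

lemma free_ext_one [simp]: "free_ext h 1 = 1"
  using free_ext_FConst[of h 1] by simp

lemma free_ext_Gen [simp]: "free_ext h (Gen g) = h g"
  by (simp add: Gen_def free_ext_single)

lemma free_ext_prod_list: "free_ext h (prod_list xs) = prod_list (map (free_ext h) xs)"
  by (induction xs) (auto simp: free_ext_mult)

lemma free_ext_free_ext: "free_ext h2 (free_ext h1 a) = free_ext (free_ext h2 \<circ> h1) a"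
  by (induction a rule: poly_mapping_induct)
     (simp_all add: free_ext_single free_ext_mult free_ext_prod_list comp_def free_ext_add)

lemma free_ext_Gen_id: "free_ext Gen a = a"
  by (induction a rule: poly_mapping_induct)
     (simp_all add: free_ext_single prod_list_Gen FConst_mult_single free_ext_add)

locale two_sided_ideal =
  fixes I :: "'a::ring_1 set"
  assumes zero_mem: "0 \<in> I"
    and add_mem: "a \<in> I \<Longrightarrow> b \<in> I \<Longrightarrow> a + b \<in> I"
    and mult_left_mem: "a \<in> I \<Longrightarrow> r * a \<in> I"
    and mult_right_mem: "a \<in> I \<Longrightarrow> a * r \<in> I"
begin

lemma uminus_mem: "a \<in> I \<Longrightarrow> - a \<in> I"
  using mult_left_mem[of a "- 1"] by simp

lemma diff_mem: "a \<in> I \<Longrightarrow> b \<in> I \<Longrightarrow> a - b \<in> I"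
  using add_mem[of a "- b"] uminus_mem[of b] by simp

lemma sum_mem: "(\<And>x. x \<in> A \<Longrightarrow> f x \<in> I) \<Longrightarrow> sum f A \<in> I"
  by (induction A rule: infinite_finite_induct) (auto intro: zero_mem add_mem)

lemma cong_refl: "a - a \<in> I"
  using zero_mem by simp

lemma cong_sym: "a - b \<in> I \<Longrightarrow> b - a \<in> I"
  using uminus_mem[of "a - b"] by simp

lemma cong_trans: "a - b \<in> I \<Longrightarrow> b - c \<in> I \<Longrightarrow> a - c \<in> I"
  using add_mem[of "a - b" "b - c"] by simp

lemma cong_add: "a - b \<in> I \<Longrightarrow> c - d \<in> I \<Longrightarrow> (a + c) - (b + d) \<in> I"
  using add_mem[of "a - b" "c - d"] by (simp add: algebra_simps)

lemma cong_diff: "a - b \<in> I \<Longrightarrow> c - d \<in> I \<Longrightarrow> (a - c) - (b - d) \<in> I"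
  using diff_mem[of "a - b" "c - d"] by (simp add: algebra_simps)

lemma cong_mult:
  assumes "a - b \<in> I" "c - d \<in> I"
  shows "a * c - b * d \<in> I"
proof -
  have "(a - b) * c + b * (c - d) \<in> I"
    using assms by (intro add_mem mult_left_mem mult_right_mem)
  then show ?thesis by (simp add: algebra_simps)
qed

lemma cong_mult_left: "c - d \<in> I \<Longrightarrow> a * c - a * d \<in> I"
  using cong_mult[OF cong_refl] .

lemma cong_mult_right: "a - b \<in> I \<Longrightarrow> a * c - b * c \<in> I"
  using cong_mult[OF _ cong_refl] .

lemma cong_sum: "(\<And>x. x \<in> A \<Longrightarrow> f x - g x \<in> I) \<Longrightarrow> sum f A - sum g A \<in> I"
  using sum_mem[of A "\<lambda>x. f x - g x"] by (simp add: sum_subtractf)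

lemma vimage_ring_hom:
  fixes f :: "'b::ring_1 \<Rightarrow> 'a"
  assumes add: "\<And>a b. f (a + b) = f a + f b" and mult: "\<And>a b. f (a * b) = f a * f b"
  shows "two_sided_ideal (f -` I)"
proof
  show "0 \<in> f -` I"
    using add[of 0 0] zero_mem by simp
qed (simp_all add: add mult add_mem mult_left_mem mult_right_mem)

end

lemma two_sided_ideal_tsideal: "two_sided_ideal (tsideal (R :: 'a::ring_1 set))"
  by unfold_locales (auto simp: tsideal_def)

lemma tsideal_generators: "R \<subseteq> tsideal R"
  unfolding tsideal_def by blast

lemma tsideal_minimal: "two_sided_ideal I \<Longrightarrow> R \<subseteq> I \<Longrightarrow> tsideal R \<subseteq> I"
  unfolding tsideal_def by (rule Inter_lower) (auto simp: two_sided_ideal_def)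

lemma tsideal_mono: "R \<subseteq> R' \<Longrightarrow> tsideal R \<subseteq> tsideal (R' :: 'a::ring_1 set)"
  using tsideal_minimal[OF two_sided_ideal_tsideal] tsideal_generators by blast

lemma ring_hom_tsideal_subset:
  fixes f :: "'a::ring_1 \<Rightarrow> 'b::ring_1"
  assumes "\<And>a b. f (a + b) = f a + f b" "\<And>a b. f (a * b) = f a * f b"
    and "two_sided_ideal J" "f ` R \<subseteq> J"
  shows "f ` tsideal R \<subseteq> J"
  using tsideal_minimal[OF two_sided_ideal.vimage_ring_hom[OF assms(3,1,2)]] assms(4) by blast

lemma free_ext_tsideal_subset:
  "two_sided_ideal J \<Longrightarrow> free_ext h ` R \<subseteq> J \<Longrightarrow> free_ext h ` tsideal R \<subseteq> J"
  using ring_hom_tsideal_subset[where f = "free_ext h", OF free_ext_add free_ext_mult] .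

interpretation UI: two_sided_ideal "UI br"
  for br :: "('n::finite, 'k::field) mpoly \<Rightarrow> ('n, 'k) mpoly \<Rightarrow> ('n, 'k) mpoly"
  unfolding UI_def by (rule two_sided_ideal_tsideal)

lemma count_mono_word: "count_list (mono_word m) i = lookup m i"
proof -
  have "finite {x. lookup m x > 0}"
    by (rule finite_subset[of _ "keys m"]) (auto simp: in_keys_iff)
  moreover obtain xs where "mset xs = Abs_multiset (lookup m)"
    using ex_mset by blast
  ultimately have "\<forall>i. count_list xs i = lookup m i"
    using count_Abs_multiset by (metis count_mset)
  then have "\<forall>i. count_list (mono_word m) i = lookup m i"
    unfolding mono_word_def by (rule someI)
  then show ?thesis by blast
qed

lemma mset_mono_word_eq_iff: "mset (mono_word m) = mset ys \<longleftrightarrow> (\<forall>i. count_list ys i = lookup m i)"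
  by (auto simp: multiset_eq_iff count_mset count_mono_word)

lemma mono_word_0 [simp]: "mono_word 0 = []"
  using mset_mono_word_eq_iff[of 0 "[]"] by simp

lemma mono_word_single_1: "mono_word (single i 1) = [i]"
proof -
  have "mset (mono_word (single i 1)) = mset [i]"
    by (subst mset_mono_word_eq_iff) (auto simp: lookup_single when_def)
  then show ?thesis by simp
qed

lemma mset_mono_word_add: "mset (mono_word (a + b)) = mset (mono_word a @ mono_word b)"
  by (subst mset_mono_word_eq_iff) (auto simp: lookup_add count_mono_word)

lemma length_mono_word: "length (mono_word (m :: 'n::finite \<Rightarrow>\<^sub>0 nat)) = mdeg m"
  using sum_count_set[of "mono_word m" UNIV] by (simp add: mdeg_def count_mono_word)

lemma emb_add: "emb (p + q) = emb p + emb q"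
  unfolding emb_def by (rule sum_keys_add) (simp_all add: FConst_add distrib_right)

lemma emb_zero [simp]: "emb 0 = 0"
  by (simp add: emb_def)

lemma emb_single: "emb (single m c) = FConst c * prod_list (map X (mono_word m))"
  unfolding emb_def by (rule sum_keys_single) simp

lemma emb_diff: "emb (p - q) = emb p - emb q"
  by (metis add_diff_cancel diff_add_cancel emb_add)

lemma emb_sum: "emb (sum f A) = (\<Sum>x\<in>A. emb (f x))"
  by (induction A rule: infinite_finite_induct) (auto simp: emb_add)

lemma emb_Const_mult: "emb (Const c * p) = FConst c * emb p"
  by (induction p rule: poly_mapping_induct)
     (simp_all add: Const_mult_single emb_single FConst_mult mult.assoc distrib_left emb_add)

lemma emb_Const: "emb (Const c) = FConst c"
  by (simp add: Const_def emb_single)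

lemma emb_Var: "emb (Var i) = X i"
  unfolding Var_def emb_single mono_word_single_1 by simp

definition x_comm_ideal :: "('n, 'k::field) falg set" where
  "x_comm_ideal = tsideal (range (\<lambda>(i, j). comm (X i) (X j)))"

interpretation x_comm: two_sided_ideal x_comm_ideal
  unfolding x_comm_ideal_def by (rule two_sided_ideal_tsideal)

lemma comm_X_X_mem: "comm (X i) (X j) \<in> x_comm_ideal"
  unfolding x_comm_ideal_def using tsideal_generators by fast

lemma X_commute_prod_list_X:
  "X x * prod_list (map X zs) - prod_list (map X zs) * X x \<in> (x_comm_ideal :: ('n, 'k::field) falg set)"
proof (induction zs)
  case Nil
  then show ?case by (simp add: x_comm.zero_mem)
next
  case (Cons z zs)
  have "(X x * X z - X z * X x) * prod_list (map X zs) \<in> (x_comm_ideal :: ('n, 'k) falg set)"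
    by (rule x_comm.mult_right_mem) (use comm_X_X_mem[of x z] in \<open>simp add: comm_def\<close>)
  moreover have "X z * (X x * prod_list (map X zs) - prod_list (map X zs) * X x) \<in> (x_comm_ideal :: ('n, 'k) falg set)"
    by (rule x_comm.mult_left_mem[OF Cons])
  ultimately show ?case
    using x_comm.add_mem by (fastforce simp: algebra_simps)
qed

lemma prod_list_X_perm:
  "mset xs = mset ys \<Longrightarrow> prod_list (map X xs) - prod_list (map X ys) \<in> (x_comm_ideal :: ('n, 'k::field) falg set)"
proof (induction xs arbitrary: ys)
  case Nil
  then show ?case by (simp add: x_comm.zero_mem)
next
  case (Cons x xs)
  then obtain ys1 ys2 where ys: "ys = ys1 @ x # ys2"
    by (metis list.set_intros(1) set_mset_mset split_list)
  let ?p = "\<lambda>xs. prod_list (map X xs) :: ('n, 'k) falg"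
  have "?p xs - ?p (ys1 @ ys2) \<in> x_comm_ideal"
    using Cons ys by (intro Cons.IH) simp
  then have "X x * ?p xs - X x * ?p ys1 * ?p ys2 \<in> x_comm_ideal"
    using x_comm.cong_mult_left by (simp add: mult.assoc)
  moreover have "X x * ?p ys1 * ?p ys2 - ?p ys1 * X x * ?p ys2 \<in> x_comm_ideal"
    by (rule x_comm.cong_mult_right[OF X_commute_prod_list_X])
  ultimately show ?case
    using x_comm.cong_trans by (simp add: ys mult.assoc)
qed

text \<open>\<open>emb\<close> is multiplicative only modulo the commutators \<open>[x\<^sub>i, x\<^sub>j]\<close>, because it writes
  each monomial as a word in a fixed but arbitrary order.\<close>
lemma emb_mult_cong: "emb (p * q) - emb p * emb q \<in> (x_comm_ideal :: ('n::finite, 'k::field) falg set)"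
proof (induction p rule: poly_mapping_induct)
  case (single a c)
  show ?case
  proof (induction q rule: poly_mapping_induct)
    case (single b d)
    have "FConst (c * d) * prod_list (map X (mono_word (a + b)))
        - FConst (c * d) * prod_list (map X (mono_word a @ mono_word b)) \<in> (x_comm_ideal :: ('n, 'k) falg set)"
      by (rule x_comm.cong_mult_left[OF prod_list_X_perm[OF mset_mono_word_add]])
    moreover have "FConst (c * d) * prod_list (map X (mono_word a @ mono_word b))
        = emb (single a c) * (emb (single b d) :: ('n, 'k) falg)"
      by (simp add: emb_single FConst_mult mult.assoc FConst_commute[of d])
    ultimately show ?case by (simp add: mult_single emb_single)
  next
    case (add q1 q2)
    then show ?case
      using x_comm.add_mem[OF add] by (simp add: distrib_left emb_add algebra_simps)
  qed (simp add: x_comm.zero_mem)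
next
  case (add p1 p2)
  then show ?case
    using x_comm.add_mem[OF add] by (simp add: distrib_right emb_add algebra_simps)
qed (simp add: x_comm.zero_mem)

section \<open>The quotient \<open>U(P)\<close>\<close>

lemma Urels_X_X: "comm (X i) (X j) \<in> Urels br"
  unfolding Urels_def by blast

lemma Urels_Y_Y: "comm (Y i) (Y j) - (\<Sum>k\<in>UNIV. emb (pd k (br (Var i) (Var j))) * Y k) \<in> Urels br"
  unfolding Urels_def by blast

lemma Urels_Y_X: "comm (Y i) (X j) - emb (br (Var i) (Var j)) \<in> Urels br"
  unfolding Urels_def by blast

lemma Urels_subset_UI: "Urels br \<subseteq> UI br"
  unfolding UI_def by (rule tsideal_generators)

lemma x_comm_ideal_subset_UI: "x_comm_ideal \<subseteq> UI br"
  unfolding x_comm_ideal_def UI_def by (rule tsideal_mono) (auto simp: Urels_X_X)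

lemma emb_mult_cong_UI: "emb (p * q) - emb p * emb q \<in> UI br"
  using emb_mult_cong x_comm_ideal_subset_UI by blast

lemma Ucls_self: "a \<in> Ucls br a"
  by (simp add: Ucls_def UI.zero_mem)

lemma Ucls_eq_iff: "Ucls br a = Ucls br b \<longleftrightarrow> a - b \<in> UI br"
proof
  assume "Ucls br a = Ucls br b"
  then show "a - b \<in> UI br"
    by (metis Ucls_def UI.cong_refl mem_Collect_eq)
next
  assume "a - b \<in> UI br"
  then show "Ucls br a = Ucls br b"
    unfolding Ucls_def using UI.cong_trans UI.cong_sym by blast
qed

lemma Ucls_some: "a - (SOME x. x \<in> Ucls br a) \<in> UI br"
proof -
  have "(SOME x. x \<in> Ucls br a) \<in> Ucls br a"
    by (rule someI[of _ a]) (rule Ucls_self)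
  then show ?thesis by (simp add: Ucls_def)
qed

lemma Ucls_binop:
  assumes compat: "\<And>a a' b b'. a - a' \<in> UI br \<Longrightarrow> b - b' \<in> UI br \<Longrightarrow> f a b - f a' b' \<in> UI br"
  shows "{c. \<exists>a'\<in>Ucls br a. \<exists>b'\<in>Ucls br b. c - f a' b' \<in> UI br} = Ucls br (f a b)"
proof (intro Set.set_eqI iffI)
  fix c assume "c \<in> {c. \<exists>a'\<in>Ucls br a. \<exists>b'\<in>Ucls br b. c - f a' b' \<in> UI br}"
  then obtain a' b' where "a - a' \<in> UI br" "b - b' \<in> UI br" and c: "c - f a' b' \<in> UI br"
    unfolding Ucls_def by blast
  then have "f a b - c \<in> UI br"
    using UI.cong_trans[OF compat UI.cong_sym[OF c]] by blast
  then show "c \<in> Ucls br (f a b)"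
    by (simp add: Ucls_def)
next
  fix c assume "c \<in> Ucls br (f a b)"
  then have "c - f a b \<in> UI br"
    by (simp add: Ucls_def UI.cong_sym)
  then show "c \<in> {c. \<exists>a'\<in>Ucls br a. \<exists>b'\<in>Ucls br b. c - f a' b' \<in> UI br}"
    using Ucls_self by blast
qed

lemma Uadd_Ucls: "Uadd br (Ucls br a) (Ucls br b) = Ucls br (a + b)"
  unfolding Uadd_def by (rule Ucls_binop) (rule UI.cong_add)

lemma Umult_Ucls: "Umult br (Ucls br a) (Ucls br b) = Ucls br (a * b)"
  unfolding Umult_def by (rule Ucls_binop) (rule UI.cong_mult)

lemma Usmul_Ucls: "Usmul br k (Ucls br a) = Ucls br (FConst k * a)"
proof -
  have "Usmul br k (Ucls br a) = {c. \<exists>a'\<in>Ucls br a. \<exists>b'\<in>Ucls br a. c - FConst k * a' \<in> UI br}"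
    unfolding Usmul_def using Ucls_self by blast
  also have "\<dots> = Ucls br (FConst k * a)"
    by (rule Ucls_binop[where f = "\<lambda>a b. FConst k * a"]) (rule UI.cong_mult_left)
  finally show ?thesis .
qed

text \<open>The generator \<open>y\<^sub>k\<close> plays the role of \<open>dx\<^sub>k\<close>, so \<open>differential p\<close> is the image of
  \<open>dp = \<Sum>\<^sub>k \<partial>p/\<partial>x\<^sub>k dx\<^sub>k\<close>; both the relations for \<open>[y\<^sub>i, y\<^sub>j]\<close> and the lift of \<open>y\<^sub>i\<close> are
  expressed through it.\<close>
definition differential :: "('n::finite, 'k::field) mpoly \<Rightarrow> ('n, 'k) falg" where
  "differential p = (\<Sum>k\<in>UNIV. emb (pd k p) * Y k)"

lemma Urels_Y_Y_differential: "comm (Y i) (Y j) - differential (br (Var i) (Var j)) \<in> Urels br"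
  unfolding differential_def by (rule Urels_Y_Y)

lemma differential_add: "differential (p + q) = differential p + differential q"
  by (simp add: differential_def pd_add emb_add distrib_right sum.distrib)

lemma differential_zero [simp]: "differential 0 = 0"
  by (simp add: differential_def)

lemma differential_sum: "differential (sum f A) = (\<Sum>a\<in>A. differential (f a))"
  by (induction A rule: infinite_finite_induct) (auto simp: differential_add)

lemma differential_Const_mult: "differential (Const c * p) = FConst c * differential p"
  by (simp add: differential_def pd_Const_mult emb_Const_mult sum_distrib_left mult.assoc)

lemma differential_Var: "differential (Var i) = Y i"
proof -
  have "differential (Var i) = (\<Sum>k\<in>UNIV. if k = i then Y k else 0)"
    unfolding differential_def by (rule sum.cong) (auto simp: pd_Var emb_Const)
  then show ?thesis by simp
qed

lemma differential_linear:
  "differential (\<Sum>k\<in>UNIV. Const (c k) * Var k) = (\<Sum>k\<in>UNIV. FConst (c k) * Y k)"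
  by (simp add: differential_sum differential_Const_mult differential_Var)

lemma comm_add_right: "comm a (b + c) = comm a b + comm a c"
  by (simp add: comm_def algebra_simps)

lemma comm_sum_left: "comm (sum f A) b = (\<Sum>x\<in>A. comm (f x) b)"
  by (simp add: comm_def sum_distrib_left sum_distrib_right sum_subtractf)

lemma comm_sum_right: "comm a (sum f A) = (\<Sum>x\<in>A. comm a (f x))"
  by (simp add: comm_def sum_distrib_left sum_distrib_right sum_subtractf)

lemma comm_FConst_mult_left: "comm (FConst c * a) b = FConst c * comm a b"
  by (simp add: comm_def right_diff_distrib mult.assoc FConst_commute[of c b, symmetric]
           flip: mult.assoc[of b])

lemma comm_FConst_mult_right: "comm a (FConst c * b) = FConst c * comm a b"
  by (simp add: comm_def right_diff_distrib mult.assoc FConst_commute[of c a, symmetric]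
           flip: mult.assoc[of a])

lemma comm_FConst: "comm a (FConst c) = 0"
  using comm_FConst_mult_right[of a c 1] by (simp add: comm_def)

context poisson_algebra
begin

lemma comm_Y_emb_cong: "comm (Y k) (emb p) - emb (br (Var k) p) \<in> UI br"
proof (induction p rule: mpoly_induct)
  case (Const c)
  then show ?case by (simp add: emb_Const comm_FConst UI.zero_mem)
next
  case (Var j)
  then show ?case using Urels_Y_X Urels_subset_UI by (fastforce simp: emb_Var)
next
  case (add p q)
  then show ?case by (simp add: emb_add comm_add_right bracket_add_right UI.cong_add)
next
  case (mult p q)
  have "comm (Y k) (emb (p * q)) - comm (Y k) (emb p * emb q) \<in> UI br"
    unfolding comm_def by (intro UI.cong_diff UI.cong_mult_left UI.cong_mult_right emb_mult_cong_UI)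
  moreover have "comm (Y k) (emb p * emb q) = comm (Y k) (emb p) * emb q + emb p * comm (Y k) (emb q)"
    by (simp add: comm_def algebra_simps)
  moreover have "comm (Y k) (emb p) * emb q + emb p * comm (Y k) (emb q)
      - (emb (br (Var k) p) * emb q + emb p * emb (br (Var k) q)) \<in> UI br"
    by (intro UI.cong_add UI.cong_mult_left UI.cong_mult_right mult)
  moreover have "emb (br (Var k) p) * emb q + emb p * emb (br (Var k) q)
      - emb (br (Var k) (p * q)) \<in> UI br"
    using UI.cong_add[OF UI.cong_sym[OF emb_mult_cong_UI] UI.cong_sym[OF emb_mult_cong_UI]]
    by (simp add: bracket_leibniz_right emb_add)
  ultimately show ?case
    using UI.cong_trans by metis
qed

lemma comm_differential_emb_cong:
  assumes "homogeneous 1 q"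
  shows "comm (differential q) (emb p) - emb (br q p) \<in> UI br"
proof -
  define c where "c k = lookup q (single k 1)" for k
  have q: "q = (\<Sum>k\<in>UNIV. Const (c k) * Var k)"
    unfolding c_def by (rule homogeneous_1_expand[OF assms])
  have "comm (differential q) (emb p) = (\<Sum>k\<in>UNIV. FConst (c k) * comm (Y k) (emb p))"
    by (subst q) (simp add: differential_linear comm_sum_left comm_FConst_mult_left)
  moreover have "emb (br q p) = (\<Sum>k\<in>UNIV. FConst (c k) * emb (br (Var k) p))"
    by (subst q) (simp add: bracket_sum_left bracket_Const_mult_left emb_sum emb_Const_mult)
  ultimately show ?thesis
    by (simp add: UI.cong_sum UI.cong_mult_left comm_Y_emb_cong)
qed

lemma comm_differential_differential_cong:
  assumes "homogeneous 1 q" "homogeneous 1 q'"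
  shows "comm (differential q) (differential q') - differential (br q q') \<in> UI br"
proof -
  define c where "c k = lookup q (single k 1)" for k
  define c' where "c' k = lookup q' (single k 1)" for k
  have q: "q = (\<Sum>k\<in>UNIV. Const (c k) * Var k)" and q': "q' = (\<Sum>k\<in>UNIV. Const (c' k) * Var k)"
    unfolding c_def c'_def by (rule homogeneous_1_expand[OF assms(1)], rule homogeneous_1_expand[OF assms(2)])
  have "comm (differential q) (differential q')
      = (\<Sum>k\<in>UNIV. FConst (c k) * (\<Sum>l\<in>UNIV. FConst (c' l) * comm (Y k) (Y l)))"
    by (subst q, subst q')
       (simp only: differential_linear comm_sum_left comm_FConst_mult_left,
        simp only: comm_sum_right comm_FConst_mult_right)
  moreover have "differential (br q q')
      = (\<Sum>k\<in>UNIV. FConst (c k) * (\<Sum>l\<in>UNIV. FConst (c' l) * differential (br (Var k) (Var l))))"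
    by (subst q, subst q')
       (simp only: bracket_sum_left bracket_Const_mult_left,
        simp only: bracket_sum_right bracket_Const_mult_right differential_sum differential_Const_mult)
  moreover have "comm (Y k) (Y l) - differential (br (Var k) (Var l)) \<in> UI br" for k l
    using Urels_Y_Y_differential Urels_subset_UI by blast
  ultimately show ?thesis
    by (simp add: UI.cong_sum UI.cong_mult_left)
qed

end

section \<open>The Poisson module structure of \<open>P\<close>\<close>

text \<open>\<open>P\<close> is a \<open>U(P)\<close>-module: \<open>x\<^sub>i\<close> acts by multiplication and \<open>y\<^sub>i\<close> by \<open>{x\<^sub>i, -}\<close>.
  It separates the images of the \<open>x\<^sub>i\<close> in \<open>U(P)\<close>, which gives injectivity of the lift.\<close>
definition gen_action ::
  "(('n, 'k::field) mpoly \<Rightarrow> ('n, 'k) mpoly \<Rightarrow> ('n, 'k) mpoly) \<Rightarrow> 'n + 'n \<Rightarrow> ('n, 'k) mpoly \<Rightarrow> ('n, 'k) mpoly"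
  where "gen_action br g p = (case g of Inl i \<Rightarrow> Var i * p | Inr i \<Rightarrow> br (Var i) p)"

definition poisson_action ::
  "(('n, 'k::field) mpoly \<Rightarrow> ('n, 'k) mpoly \<Rightarrow> ('n, 'k) mpoly) \<Rightarrow> ('n, 'k) falg \<Rightarrow> ('n, 'k) mpoly \<Rightarrow> ('n, 'k) mpoly"
  where "poisson_action br a p = (\<Sum>w\<in>keys a. Const (lookup a w) * foldr (gen_action br) (fwlist w) p)"

definition action_annihilator ::
  "(('n, 'k::field) mpoly \<Rightarrow> ('n, 'k) mpoly \<Rightarrow> ('n, 'k) mpoly) \<Rightarrow> ('n, 'k) falg set"
  where "action_annihilator br = {a. \<forall>p. poisson_action br a p = 0}"

lemma poisson_action_add: "poisson_action br (a + b) p = poisson_action br a p + poisson_action br b p"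
  unfolding poisson_action_def by (rule sum_keys_add) (simp_all add: Const_add distrib_right)

lemma poisson_action_zero [simp]: "poisson_action br 0 p = 0"
  by (simp add: poisson_action_def)

lemma poisson_action_single:
  "poisson_action br (single w c) p = Const c * foldr (gen_action br) (fwlist w) p"
  unfolding poisson_action_def by (rule sum_keys_single) simp

lemma poisson_action_diff: "poisson_action br (a - b) p = poisson_action br a p - poisson_action br b p"
  by (metis add_diff_cancel diff_add_cancel poisson_action_add)

lemma poisson_action_sum: "poisson_action br (sum f A) p = (\<Sum>x\<in>A. poisson_action br (f x) p)"
  by (induction A rule: infinite_finite_induct) (auto simp: poisson_action_add)

lemma poisson_action_Gen: "poisson_action br (Gen g) p = gen_action br g p"
  by (simp add: Gen_def poisson_action_single)

lemma poisson_action_FConst: "poisson_action br (FConst c) p = Const c * p"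
  by (simp add: FConst_def poisson_action_single)

context poisson_algebra
begin

lemma foldr_gen_action_add:
  "foldr (gen_action br) w (p + q) = foldr (gen_action br) w p + foldr (gen_action br) w q"
  by (induction w) (auto simp: gen_action_def distrib_left bracket_add_right split: sum.split)

lemma foldr_gen_action_Const_mult:
  "foldr (gen_action br) w (Const c * p) = Const c * foldr (gen_action br) w p"
  by (induction w) (auto simp: gen_action_def mult.left_commute bracket_Const_mult_right split: sum.split)

lemma poisson_action_add_right:
  "poisson_action br a (p + q) = poisson_action br a p + poisson_action br a q"
  by (induction a rule: poly_mapping_induct)
     (simp_all add: poisson_action_single foldr_gen_action_add distrib_left poisson_action_add)

lemma poisson_action_mult:
  "poisson_action br (a * b) p = poisson_action br a (poisson_action br b p)"
proof (induction a rule: poly_mapping_induct)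
  case (single u c)
  have zero: "poisson_action br a 0 = 0" for a
    using poisson_action_add_right[of a 0 0] by simp
  show ?case
  proof (induction b rule: poly_mapping_induct)
    case (single v d)
    then show ?case
      by (simp add: mult_single poisson_action_single foldr_gen_action_Const_mult Const_mult mult.assoc)
  next
    case (add b1 b2)
    then show ?case by (simp add: distrib_left poisson_action_add poisson_action_add_right)
  qed (simp add: zero)
next
  case (add a1 a2)
  then show ?case by (simp add: distrib_right poisson_action_add)
qed simp

lemma two_sided_ideal_action_annihilator: "two_sided_ideal (action_annihilator br)"
  by unfold_locales
     (auto simp: action_annihilator_def poisson_action_add poisson_action_mult
           intro: poisson_action_add_right[of _ 0 0, simplified])

lemma poisson_action_emb: "poisson_action br (emb f) p = f * p"
proof (induction f arbitrary: p rule: mpoly_induct)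
  case (Const c)
  then show ?case by (simp add: emb_Const poisson_action_FConst)
next
  case (Var i)
  then show ?case by (simp add: emb_Var poisson_action_Gen gen_action_def)
next
  case (add f g)
  then show ?case by (simp add: emb_add poisson_action_add distrib_right)
next
  case (mult f g)
  have "x_comm_ideal \<subseteq> action_annihilator br"
    unfolding x_comm_ideal_def
    by (rule tsideal_minimal[OF two_sided_ideal_action_annihilator])
       (auto simp: action_annihilator_def comm_def poisson_action_diff poisson_action_mult
                   poisson_action_Gen gen_action_def mult.left_commute)
  then have "poisson_action br (emb (f * g)) p = poisson_action br (emb f * emb g) p"
    using emb_mult_cong by (fastforce simp: action_annihilator_def poisson_action_diff)
  then show ?case by (simp add: poisson_action_mult mult mult.assoc)
qed

lemma poisson_action_differential: "poisson_action br (differential f) p = br f p"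
  by (simp add: differential_def poisson_action_sum poisson_action_mult poisson_action_Gen
                gen_action_def poisson_action_emb bracket_chain_rule[of f p])

lemma UI_subset_action_annihilator: "UI br \<subseteq> action_annihilator br"
  unfolding UI_def
proof (rule tsideal_minimal[OF two_sided_ideal_action_annihilator], rule subsetI)
  fix r assume "r \<in> Urels br"
  then obtain i j where "r = comm (X i) (X j) \<or> r = comm (Y i) (Y j) - differential (br (Var i) (Var j))
      \<or> r = comm (Y i) (X j) - emb (br (Var i) (Var j))"
    unfolding Urels_def differential_def by blast
  moreover have "br (Var i) (br (Var j) p) - br (Var j) (br (Var i) p) = br (br (Var i) (Var j)) p" for p
    using bracket_jacobi[of "Var i" "Var j" p] bracket_skew[of p "br (Var i) (Var j)"]
          bracket_skew[of p "Var i"] bracket_uminus_right[of "Var j" "br (Var i) p"]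
    by (simp add: algebra_simps)
  ultimately show "r \<in> action_annihilator br"
    by (auto simp: action_annihilator_def comm_def poisson_action_diff poisson_action_mult
                   poisson_action_Gen gen_action_def poisson_action_emb poisson_action_differential
                   bracket_leibniz_right mult.left_commute)
qed

end

section \<open>Lifting a graded Poisson automorphism to the free algebra\<close>

lemma tilde_gen_Inl: "tilde_gen \<phi> (Inl i) = emb (\<phi> (Var i))"
  by (simp add: tilde_gen_def)

lemma tilde_gen_Inr: "tilde_gen \<phi> (Inr i) = differential (\<phi> (Var i))"
  by (simp add: tilde_gen_def differential_def)

context graded_poisson_aut
begin

abbreviation lift :: "('n, 'k) falg \<Rightarrow> ('n, 'k) falg" where
  "lift \<equiv> free_ext (tilde_gen \<phi>)"

lemma lift_x_comm_ideal: "a \<in> x_comm_ideal \<Longrightarrow> lift a \<in> UI br"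
proof -
  have "lift ` x_comm_ideal \<subseteq> UI br"
    unfolding x_comm_ideal_def
  proof (rule free_ext_tsideal_subset[OF UI.two_sided_ideal_axioms], clarify)
    fix i j
    let ?a = "\<phi> (Var i)" and ?b = "\<phi> (Var j)"
    have "(emb (?b * ?a) - emb ?b * emb ?a) - (emb (?a * ?b) - emb ?a * emb ?b) \<in> UI br"
      by (rule UI.diff_mem[OF emb_mult_cong_UI emb_mult_cong_UI])
    then show "lift (comm (X i) (X j)) \<in> UI br"
      by (simp add: comm_def free_ext_diff free_ext_mult tilde_gen_Inl mult.commute)
  qed
  then show "a \<in> x_comm_ideal \<Longrightarrow> lift a \<in> UI br"
    by blast
qed

lemma lift_emb_cong: "lift (emb p) - emb (\<phi> p) \<in> UI br"
proof (induction p rule: mpoly_induct)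
  case (Const c)
  then show ?case by (simp add: emb_Const UI.zero_mem)
next
  case (Var i)
  then show ?case by (simp add: emb_Var tilde_gen_Inl UI.zero_mem)
next
  case (add p q)
  then show ?case by (simp add: emb_add free_ext_add map_add UI.cong_add)
next
  case (mult p q)
  have "lift (emb (p * q) - emb p * emb q) \<in> UI br"
    by (rule lift_x_comm_ideal[OF emb_mult_cong])
  then have "lift (emb (p * q)) - lift (emb p) * lift (emb q) \<in> UI br"
    by (simp add: free_ext_diff free_ext_mult)
  moreover have "lift (emb p) * lift (emb q) - emb (\<phi> p) * emb (\<phi> q) \<in> UI br"
    by (rule UI.cong_mult[OF mult])
  moreover have "emb (\<phi> p) * emb (\<phi> q) - emb (\<phi> (p * q)) \<in> UI br"
    by (simp add: map_mult UI.cong_sym[OF emb_mult_cong_UI])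
  ultimately show ?case
    using UI.cong_trans by metis
qed

lemma differential_map_Var: "differential (\<phi> (Var i)) = (\<Sum>k\<in>UNIV. FConst (jacobian \<phi> i k) * Y k)"
  by (simp add: differential_def pd_map_Var emb_Const)

lemma differential_map: "differential (\<phi> p) = (\<Sum>k\<in>UNIV. emb (\<phi> (pd k p)) * differential (\<phi> (Var k)))"
proof -
  have "differential (\<phi> p) = (\<Sum>m\<in>UNIV. \<Sum>k\<in>UNIV. FConst (jacobian \<phi> k m) * emb (\<phi> (pd k p)) * Y m)"
    by (simp add: differential_def pd_chain_rule[of _ p] pd_map_Var emb_sum mult.commute[of _ "Const _"]
                  emb_Const_mult sum_distrib_right)
  also have "\<dots> = (\<Sum>k\<in>UNIV. \<Sum>m\<in>UNIV. emb (\<phi> (pd k p)) * (FConst (jacobian \<phi> k m) * Y m))"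
    by (subst sum.swap) (simp add: FConst_commute mult.assoc)
  finally show ?thesis
    by (simp add: differential_map_Var sum_distrib_left)
qed

lemma lift_differential_cong: "lift (differential p) - differential (\<phi> p) \<in> UI br"
proof -
  have "lift (differential p) = (\<Sum>k\<in>UNIV. lift (emb (pd k p)) * differential (\<phi> (Var k)))"
    by (simp add: differential_def[of p] free_ext_sum free_ext_mult tilde_gen_Inr)
  then show ?thesis
    by (simp add: differential_map[of p] UI.cong_sum UI.cong_mult_right lift_emb_cong)
qed

end

locale poisson_aut = poisson_algebra br + graded_poisson_aut br \<phi>
  for br :: "('n::finite, 'k::field) mpoly \<Rightarrow> ('n, 'k) mpoly \<Rightarrow> ('n, 'k) mpoly" and \<phi>
begin

lemma lift_Urels: "r \<in> Urels br \<Longrightarrow> lift r \<in> UI br"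
proof -
  have hom: "homogeneous 1 (\<phi> (Var i))" for i
    by (rule map_homogeneous[OF homogeneous_Var])
  assume "r \<in> Urels br"
  then obtain i j where "r = comm (X i) (X j) \<or> r = comm (Y i) (Y j) - differential (br (Var i) (Var j))
      \<or> r = comm (Y i) (X j) - emb (br (Var i) (Var j))"
    unfolding Urels_def differential_def by blast
  moreover have "lift (comm (X i) (X j)) \<in> UI br"
    by (rule lift_x_comm_ideal[OF comm_X_X_mem])
  moreover have "lift (comm (Y i) (Y j) - differential (br (Var i) (Var j))) \<in> UI br"
    using UI.cong_diff[OF comm_differential_differential_cong[OF hom[of i] hom[of j]]
                          lift_differential_cong[of "br (Var i) (Var j)"]]
    by (simp add: comm_def free_ext_diff free_ext_mult tilde_gen_Inr map_bracket)
  moreover have "lift (comm (Y i) (X j) - emb (br (Var i) (Var j))) \<in> UI br"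
    using UI.cong_diff[OF comm_differential_emb_cong[OF hom[of i], of "\<phi> (Var j)"]
                          lift_emb_cong[of "br (Var i) (Var j)"]]
    by (simp add: comm_def free_ext_diff free_ext_mult tilde_gen_Inl tilde_gen_Inr map_bracket)
  ultimately show ?thesis by blast
qed

lemma lift_UI: "a \<in> UI br \<Longrightarrow> lift a \<in> UI br"
  unfolding UI_def
  using free_ext_tsideal_subset[OF UI.two_sided_ideal_axioms[unfolded UI_def]] lift_Urels[unfolded UI_def]
  by blast

lemma tilde_Ucls: "tilde br \<phi> (Ucls br a) = Ucls br (lift a)"
proof -
  have "lift (a - (SOME x. x \<in> Ucls br a)) \<in> UI br"
    by (rule lift_UI[OF Ucls_some])
  then have "Ucls br (lift (SOME x. x \<in> Ucls br a)) = Ucls br (lift a)"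
    by (simp add: Ucls_eq_iff free_ext_diff UI.cong_sym)
  moreover have "Ucls br a \<in> Ucarrier br"
    by (simp add: Ucarrier_def)
  ultimately show ?thesis
    by (simp add: tilde_def)
qed

end

lemma fhom_sum: "(\<And>x. x \<in> A \<Longrightarrow> fhom d (f x)) \<Longrightarrow> fhom d (sum f A)"
  using keys_sum[of f A] unfolding fhom_def by blast

lemma fhom_mult: "fhom d a \<Longrightarrow> fhom e b \<Longrightarrow> fhom (d + e) (a * b)"
  unfolding fhom_def using keys_mult[of a b] by fastforce

lemma fhom_FConst_mult: "fhom d a \<Longrightarrow> fhom d (FConst c * a)"
  using fhom_mult[of 0 "FConst c" d a] by (simp add: fhom_def FConst_def)

lemma fhom_Gen: "fhom 1 (Gen g)"
  by (simp add: fhom_def Gen_def)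

lemma fhom_prod_list_map:
  "(\<And>x. x \<in> set xs \<Longrightarrow> fhom 1 (h x)) \<Longrightarrow> fhom (length xs) (prod_list (map h xs))"
proof (induction xs)
  case Nil
  then show ?case by (simp add: fhom_def)
next
  case (Cons x xs)
  then show ?case using fhom_mult[of 1 "h x" "length xs" "prod_list (map h xs)"] by simp
qed

lemma fhom_emb:
  assumes "homogeneous d (p :: ('n::finite, 'k::field) mpoly)"
  shows "fhom d (emb p)"
  unfolding emb_def
proof (intro fhom_sum fhom_FConst_mult)
  fix m assume "m \<in> keys p"
  then have "length (mono_word m) = d"
    using assms by (simp add: homogeneous_def length_mono_word)
  then show "fhom d (prod_list (map X (mono_word m)))"
    using fhom_prod_list_map[of "mono_word m" X, OF fhom_Gen] by simp
qed

lemma fhom_free_ext: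
  assumes "\<And>g. fhom 1 (h g)" "fhom d a"
  shows "fhom d (free_ext h a)"
  unfolding free_ext_def
proof (intro fhom_sum fhom_FConst_mult)
  fix w assume "w \<in> keys a"
  then have "length (fwlist w) = d"
    using assms(2) by (simp add: fhom_def)
  then show "fhom d (prod_list (map h (fwlist w)))"
    using fhom_prod_list_map[of "fwlist w" h] assms(1) by simp
qed

lemma (in graded_poisson_aut) fhom_tilde_gen: "fhom 1 (tilde_gen \<phi> g)"
proof (cases g)
  case (Inl i)
  then show ?thesis
    using fhom_emb[OF map_homogeneous[OF homogeneous_Var]] by (simp add: tilde_gen_Inl)
next
  case (Inr i)
  show ?thesis
    unfolding Inr tilde_gen_Inr differential_map_Var by (intro fhom_sum fhom_FConst_mult fhom_Gen)
qed

lemma free_ext_cong: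
  assumes "two_sided_ideal I" "\<And>g. h g - h' g \<in> I"
  shows "free_ext h a - free_ext h' a \<in> I"
proof -
  interpret two_sided_ideal I by fact
  have "prod_list (map h w) - prod_list (map h' w) \<in> I" for w
    by (induction w) (simp_all add: zero_mem cong_mult assms(2))
  then show ?thesis
    by (induction a rule: poly_mapping_induct)
       (simp_all add: free_ext_single free_ext_add cong_mult_left cong_add zero_mem)
qed

lemma tilde_gen_id: "tilde_gen id g = Gen g"
  by (cases g) (simp_all add: tilde_gen_Inl tilde_gen_Inr emb_Var differential_Var)

lemma PAut_gr_eqI:
  assumes "\<phi> \<in> PAut_gr br" "\<psi> \<in> PAut_gr br" "\<And>i. \<phi> (Var i) = \<psi> (Var i)"
  shows "\<phi> = \<psi>"
proof
  interpret \<phi>: graded_poisson_aut br \<phi> by standard (rule assms(1))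
  interpret \<psi>: graded_poisson_aut br \<psi> by standard (rule assms(2))
  show "\<phi> f = \<psi> f" for f
    by (induction f rule: mpoly_induct)
       (simp_all add: assms(3) \<phi>.map_add \<psi>.map_add \<phi>.map_mult \<psi>.map_mult)
qed

context poisson_aut
begin

lemma tilde_Ucarrier: "A \<in> Ucarrier br \<Longrightarrow> tilde br \<phi> A \<in> Ucarrier br"
  unfolding Ucarrier_def by (auto simp only: tilde_Ucls intro: rangeI)

lemma tilde_Udeg: "tilde br \<phi> ` Udeg br d \<subseteq> Udeg br d"
proof (rule image_subsetI)
  fix B assume "B \<in> Udeg br d"
  then obtain a where a: "fhom d a" and B: "B = Ucls br a"
    unfolding Udeg_def by blast
  have "fhom d (lift a)"
    by (rule fhom_free_ext[where h = "tilde_gen \<phi>", OF fhom_tilde_gen a])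
  then show "tilde br \<phi> B \<in> Udeg br d"
    unfolding B tilde_Ucls Udeg_def by (rule imageI[OF CollectI])
qed

end

context poisson_algebra
begin

lemma poisson_aut: "\<phi> \<in> PAut_gr br \<Longrightarrow> poisson_aut br \<phi>"
  by (intro poisson_aut.intro poisson_algebra_axioms graded_poisson_aut.intro)

lemma tilde_id: "A \<in> Ucarrier br \<Longrightarrow> tilde br id A = A"
proof -
  interpret id: poisson_aut br id by (rule poisson_aut[OF PAut_gr_id])
  show "A \<in> Ucarrier br \<Longrightarrow> tilde br id A = A"
    by (auto simp: Ucarrier_def id.tilde_Ucls tilde_gen_id[abs_def] free_ext_Gen_id)
qed

lemma tilde_comp:
  assumes "\<phi> \<in> PAut_gr br" "\<psi> \<in> PAut_gr br" "A \<in> Ucarrier br"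
  shows "tilde br \<phi> (tilde br \<psi> A) = tilde br (\<phi> \<circ> \<psi>) A"
proof -
  interpret \<phi>: poisson_aut br \<phi> by (rule poisson_aut[OF assms(1)])
  interpret \<psi>: poisson_aut br \<psi> by (rule poisson_aut[OF assms(2)])
  interpret \<phi>\<psi>: poisson_aut br "\<phi> \<circ> \<psi>" by (rule poisson_aut[OF PAut_gr_comp[OF assms(1,2)]])
  obtain a where A: "A = Ucls br a"
    using assms(3) by (auto simp: Ucarrier_def)
  have "\<phi>.lift (tilde_gen \<psi> g) - tilde_gen (\<phi> \<circ> \<psi>) g \<in> UI br" for g
    by (cases g) (simp_all add: tilde_gen_Inl tilde_gen_Inr \<phi>.lift_emb_cong \<phi>.lift_differential_cong)
  then have "\<phi>.lift (\<psi>.lift a) - \<phi>\<psi>.lift a \<in> UI br"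
    unfolding free_ext_free_ext by (intro free_ext_cong[OF UI.two_sided_ideal_axioms]) simp
  then show ?thesis
    by (simp add: A \<phi>.tilde_Ucls \<psi>.tilde_Ucls \<phi>\<psi>.tilde_Ucls Ucls_eq_iff)
qed

lemma tilde_Bij:
  assumes "\<phi> \<in> PAut_gr br"
  shows "tilde br \<phi> \<in> Bij (Ucarrier br)"
proof -
  interpret poisson_aut br \<phi> by (rule poisson_aut[OF assms])
  let ?\<psi> = "inv_into UNIV \<phi>"
  interpret \<psi>: poisson_aut br ?\<psi> by (rule poisson_aut[OF inv_PAut])
  have "?\<psi> \<circ> \<phi> = id" "\<phi> \<circ> ?\<psi> = id"
    by (metis bij bij_is_inj inj_iff, metis bij bij_is_surj surj_iff)
  then have "bij_betw (tilde br \<phi>) (Ucarrier br) (Ucarrier br)"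
    using tilde_comp[OF assms inv_PAut] tilde_comp[OF inv_PAut assms]
    by (intro bij_betw_byWitness[where f' = "tilde br ?\<psi>"])
       (auto simp: tilde_id tilde_Ucarrier \<psi>.tilde_Ucarrier)
  moreover have "tilde br \<phi> \<in> extensional (Ucarrier br)"
    by (simp add: tilde_def)
  ultimately show ?thesis
    unfolding Bij_def by blast
qed

lemma tilde_GrAut:
  assumes "\<phi> \<in> PAut_gr br"
  shows "tilde br \<phi> \<in> GrAut_U br"
proof -
  interpret poisson_aut br \<phi> by (rule poisson_aut[OF assms])
  show ?thesis
    unfolding GrAut_U_def
  proof (intro CollectI conjI ballI allI tilde_Bij[OF assms] tilde_Udeg)
    fix A B assume "A \<in> Ucarrier br" "B \<in> Ucarrier br"
    then obtain a b where "A = Ucls br a" "B = Ucls br b"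
      by (auto simp: Ucarrier_def)
    then show "tilde br \<phi> (Uadd br A B) = Uadd br (tilde br \<phi> A) (tilde br \<phi> B)"
      and "tilde br \<phi> (Umult br A B) = Umult br (tilde br \<phi> A) (tilde br \<phi> B)"
      by (simp_all add: Uadd_Ucls Umult_Ucls tilde_Ucls free_ext_add free_ext_mult)
  next
    fix c A assume "A \<in> Ucarrier br"
    then show "tilde br \<phi> (Usmul br c A) = Usmul br c (tilde br \<phi> A)"
      by (auto simp: Ucarrier_def Usmul_Ucls tilde_Ucls free_ext_mult)
  qed (simp add: Uone_def tilde_Ucls)
qed

lemma tilde_inj_on: "inj_on (tilde br) (PAut_gr br)"
proof (rule inj_onI)
  fix \<phi> \<psi> assume \<phi>: "\<phi> \<in> PAut_gr br" and \<psi>: "\<psi> \<in> PAut_gr br" and eq: "tilde br \<phi> = tilde br \<psi>"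
  interpret \<phi>: poisson_aut br \<phi> by (rule poisson_aut[OF \<phi>])
  interpret \<psi>: poisson_aut br \<psi> by (rule poisson_aut[OF \<psi>])
  show "\<phi> = \<psi>"
  proof (rule PAut_gr_eqI[OF \<phi> \<psi>])
    fix i
    have "Ucls br (emb (\<phi> (Var i))) = Ucls br (emb (\<psi> (Var i)))"
      using eq \<phi>.tilde_Ucls[of "X i"] \<psi>.tilde_Ucls[of "X i"] by (simp add: tilde_gen_Inl)
    then have "emb (\<phi> (Var i) - \<psi> (Var i)) \<in> action_annihilator br"
      using UI_subset_action_annihilator by (auto simp: Ucls_eq_iff emb_diff)
    then have "poisson_action br (emb (\<phi> (Var i) - \<psi> (Var i))) 1 = 0"
      by (simp add: action_annihilator_def)
    then show "\<phi> (Var i) = \<psi> (Var i)"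
      by (simp add: poisson_action_emb)
  qed
qed

lemma tilde_hom: "tilde br \<in> hom (PAutGrp br) (BijGroup (Ucarrier br))"
proof (rule homI)
  fix \<phi> \<psi> assume "\<phi> \<in> carrier (PAutGrp br)" "\<psi> \<in> carrier (PAutGrp br)"
  then have \<phi>: "\<phi> \<in> PAut_gr br" and \<psi>: "\<psi> \<in> PAut_gr br"
    by (simp_all add: PAutGrp_def)
  have "compose (Ucarrier br) (tilde br \<phi>) (tilde br \<psi>) A = tilde br (\<phi> \<circ> \<psi>) A" for A
    by (cases "A \<in> Ucarrier br") (simp_all add: compose_def tilde_comp[OF \<phi> \<psi>], simp add: tilde_def)
  then show "tilde br (\<phi> \<otimes>\<^bsub>PAutGrp br\<^esub> \<psi>) = tilde br \<phi> \<otimes>\<^bsub>BijGroup (Ucarrier br)\<^esub> tilde br \<psi>"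
    by (auto simp: PAutGrp_def BijGroup_def tilde_Bij[OF \<phi>] tilde_Bij[OF \<psi>])
qed (auto simp: PAutGrp_def BijGroup_def tilde_Bij)

end

lemma subgroup_carrier_update:
  fixes G (structure)
  assumes "group G" "subgroup H G" "H \<subseteq> K" "K \<subseteq> carrier G"
  shows "subgroup H (G\<lparr>carrier := K\<rparr>)"
proof -
  interpret group G by fact
  have inv: "inv\<^bsub>G\<lparr>carrier := K\<rparr>\<^esub> x = inv x" if x: "x \<in> H" for x
  proof -
    have xG: "x \<in> carrier G" and invH: "inv x \<in> H"
      using x assms(2) by (simp_all add: subgroup.mem_carrier subgroup.m_inv_closed)
    show ?thesis
      unfolding m_inv_def[of "G\<lparr>carrier := K\<rparr>"]
    proof (rule the_equality)
      show "inv x \<in> carrier (G\<lparr>carrier := K\<rparr>) \<and> x \<otimes>\<^bsub>G\<lparr>carrier := K\<rparr>\<^esub> inv x = \<one>\<^bsub>G\<lparr>carrier := K\<rparr>\<^esub>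
          \<and> inv x \<otimes>\<^bsub>G\<lparr>carrier := K\<rparr>\<^esub> x = \<one>\<^bsub>G\<lparr>carrier := K\<rparr>\<^esub>"
        using invH xG assms(3) by auto
    next
      fix y assume "y \<in> carrier (G\<lparr>carrier := K\<rparr>) \<and> x \<otimes>\<^bsub>G\<lparr>carrier := K\<rparr>\<^esub> y = \<one>\<^bsub>G\<lparr>carrier := K\<rparr>\<^esub>
          \<and> y \<otimes>\<^bsub>G\<lparr>carrier := K\<rparr>\<^esub> x = \<one>\<^bsub>G\<lparr>carrier := K\<rparr>\<^esub>"
      then have "y \<in> carrier G" "y \<otimes> x = \<one>"
        using assms(4) by auto
      then show "y = inv x"
        using inv_equality[OF _ xG] by simp
    qed
  qed
  show ?thesis
  proof (rule subgroup.intro)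
    fix x y assume "x \<in> H" "y \<in> H"
    then show "x \<otimes>\<^bsub>G\<lparr>carrier := K\<rparr>\<^esub> y \<in> H"
      using subgroup.m_closed[OF assms(2)] by simp
  next
    fix x assume "x \<in> H"
    then show "inv\<^bsub>G\<lparr>carrier := K\<rparr>\<^esub> x \<in> H"
      using inv subgroup.m_inv_closed[OF assms(2)] by simp
  qed (use assms(2,3) subgroup.one_closed in auto)
qed

theorem lemma2p4:
  fixes br :: "('n::finite, 'k::field_char_0) mpoly \<Rightarrow> ('n, 'k) mpoly \<Rightarrow> ('n, 'k) mpoly"
    and G :: "(('n, 'k) mpoly \<Rightarrow> ('n, 'k) mpoly) set"
  assumes alg_closed: "\<forall>p :: 'k poly. degree p > 0 \<longrightarrow> (\<exists>x. poly p x = 0)"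
    and quad: "quadratic_poisson br"
    and sub: "subgroup G (PAutGrp br)"
  shows "subgroup (tilde br ` G) (GrAutGrp_U br) \<and>
         tilde br \<in> iso ((PAutGrp br)\<lparr>carrier := G\<rparr>) ((GrAutGrp_U br)\<lparr>carrier := tilde br ` G\<rparr>)"
proof
  interpret poisson_algebra br
    using quad by unfold_locales (simp add: quadratic_poisson_def)
  interpret tilde: group_hom "PAutGrp br" "BijGroup (Ucarrier br)" "tilde br"
    by (intro group_hom.intro group_hom_axioms.intro group_PAutGrp group_BijGroup tilde_hom)
  have G: "G \<subseteq> PAut_gr br"
    using subgroup.subset[OF sub] by (simp add: PAutGrp_def)
  have "tilde br ` G \<subseteq> GrAut_U br"
    using G tilde_GrAut by blast
  moreover have "GrAut_U br \<subseteq> carrier (BijGroup (Ucarrier br))"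
    unfolding GrAut_U_def BijGroup_def by auto
  ultimately show "subgroup (tilde br ` G) (GrAutGrp_U br)"
    unfolding GrAutGrp_U_def
    by (rule subgroup_carrier_update[OF group_BijGroup tilde.subgroup_img_is_subgroup[OF sub]])
  have "(GrAutGrp_U br)\<lparr>carrier := tilde br ` G\<rparr> = (BijGroup (Ucarrier br))\<lparr>carrier := tilde br ` G\<rparr>"
    by (simp add: GrAutGrp_U_def)
  moreover have "tilde br \<in> hom ((PAutGrp br)\<lparr>carrier := G\<rparr>) ((BijGroup (Ucarrier br))\<lparr>carrier := tilde br ` G\<rparr>)"
    by (rule group_hom.homh[OF tilde.induced_group_hom[OF sub]])
  moreover have "bij_betw (tilde br) G (tilde br ` G)"
    using inj_on_subset[OF tilde_inj_on G] by (simp add: bij_betw_def)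
  ultimately show "tilde br \<in> iso ((PAutGrp br)\<lparr>carrier := G\<rparr>) ((GrAutGrp_U br)\<lparr>carrier := tilde br ` G\<rparr>)"
    unfolding iso_def by simp
qed

end
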